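(* Let $\lambda>0$ and $\mu>0$. Let $X$ be Poisson with parameter $\mu$, let $Y$ be a random variable with values in $\{0,1,2,\dots\}$ with $\mathrm{E}[Y]=\mu$ and $\mathrm{E}[Y^2]<\infty$, and for each $n\ge\lambda^2$ let $A_n$ be an event with $P(A_n)=1-\frac{\lambda}{\sqrt n}$, with $X$, $Y$, $I(A_n)$ independent. Let $X^{(n)}$ have the distribution of $I(A_n)X+I(A_n^c)Y$, and let $X^{(n)}_1,\dots,X^{(n)}_n$ be i.i.d. copies of $X^{(n)}$, with sample mean $\overline X_n'$ and empirical distribution function $F_n'$. For a fixed natural number $k$, with $f_k(m)=e^{-m}\sum_{j=0}^k\frac{m^j}{j!}$, let $$U_n^{(k)}=\sqrt n\,\{f_k(\overline X_n')-F_n'(k)\}.$$ Then $U_n^{(k)}$ converges in distribution as $n\to\infty$ to $\mathcal N(\tau_k,\sigma^2_{\mu,k})$, where $\tau_k=-\lambda\{P(Y\le k)-f_k(\mu)\}$ and $\sigma^2_{\mu,k}=f_k(\mu)\{1-f_k(\mu)\}-\frac{e^{-2\mu}\mu^{2k+1}}{(k!)^2}$. In particular, $U_n^{(k_n^* )}$ has the same asymptotic behaviour as $U_n^{(0)}$, which converges in distribution to $\mathcal N\big(\lambda\{e^{-\mu}-P(Y=0)\},\,e^{-2\mu}(e^{\mu}-1-\mu)\big)$, where $$k_n^*=\min\Big\{k\ge 0:\ I(\overline X_n'\ge 1)\,\frac{\widetilde\sigma_{n,k}}{f_k^2(\overline X_n')\sqrt n}\le e\Big\},$$ $$\widetilde\sigma^2_{n,k}=e^{-2\overline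 X_n'}\Big\{\Big(\sum_{j=0}^k\frac{(\overline X_n')^j}{j!}\Big)\Big(e^{\overline X_n'}-\sum_{j=0}^k\frac{(\overline X_n')^j}{j!}\Big)-\frac{(\overline X_n')^{2k+1}}{(k!)^2}\Big\},\quad \widetilde\sigma_{n,k}=\sqrt{\widetilde\sigma^2_{n,k}}.$$
   Context: $I(\cdot)$ is the indicator function; $F_n'(k)=\frac1n\sum_{i=1}^n I(X_i^{(n)}\le k)$. *)

theory Defs
  imports "HOL-Probability.Probability"
begin

definition fk :: "nat \<Rightarrow> real \<Rightarrow> real" where
  "fk k m = exp (- m) * (\<Sum>j\<le>k. m ^ j / fact j)"

(* Distribution of X^(n) = I(A_n) X + I(A_n^c) Y with X ~ Poisson(mu), Y ~ Y,
   P(A_n) = 1 - lambda / sqrt n, X, Y, I(A_n) independent.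
   (bernoulli_pmf clamps its parameter to [0,1]; only relevant for n < lambda^2.) *)
definition Xn_pmf :: "real \<Rightarrow> real \<Rightarrow> nat pmf \<Rightarrow> nat \<Rightarrow> nat pmf" where
  "Xn_pmf lam mu Y n =
     bind_pmf (bernoulli_pmf (1 - lam / sqrt (real n)))
              (\<lambda>a. if a then poisson_pmf mu else Y)"

definition sample_pmf :: "real \<Rightarrow> real \<Rightarrow> nat pmf \<Rightarrow> nat \<Rightarrow> (nat \<Rightarrow> nat) pmf" where
  "sample_pmf lam mu Y n = Pi_pmf {..<n} 0 (\<lambda>_. Xn_pmf lam mu Y n)"

definition sample_mean :: "nat \<Rightarrow> (nat \<Rightarrow> nat) \<Rightarrow> real" where
  "sample_mean n \<omega> = (\<Sum>i<n. real (\<omega> i)) / real n"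

definition emp_cdf :: "nat \<Rightarrow> (nat \<Rightarrow> nat) \<Rightarrow> nat \<Rightarrow> real" where
  "emp_cdf n \<omega> k = (\<Sum>i<n. of_bool (\<omega> i \<le> k)) / real n"

definition U :: "nat \<Rightarrow> nat \<Rightarrow> (nat \<Rightarrow> nat) \<Rightarrow> real" where
  "U n k \<omega> = sqrt (real n) * (fk k (sample_mean n \<omega>) - emp_cdf n \<omega> k)"

definition sigma_tilde_sq :: "nat \<Rightarrow> real \<Rightarrow> real" where
  "sigma_tilde_sq k m = exp (- 2 * m) *
     ((\<Sum>j\<le>k. m ^ j / fact j) * (exp m - (\<Sum>j\<le>k. m ^ j / fact j))
      - m ^ (2 * k + 1) / (fact k) ^ 2)"

definition kstar :: "nat \<Rightarrow> (nat \<Rightarrow> nat) \<Rightarrow> nat" where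
  "kstar n \<omega> = (LEAST k. of_bool (sample_mean n \<omega> \<ge> 1) *
        sqrt (sigma_tilde_sq k (sample_mean n \<omega>))
        / ((fk k (sample_mean n \<omega>))\<^sup>2 * sqrt (real n)) \<le> exp 1)"

definition normal_measure :: "real \<Rightarrow> real \<Rightarrow> real measure" where
  "normal_measure m s2 =
     (if s2 > 0 then density lborel (normal_density m (sqrt s2)) else return borel m)"

end

theory Submission
  imports Defs
begin

(* Linearise f_k at mu, where f_k' = -p_k with p_k(m) = exp(-m) m^k / k!.  Then
     U_n^(k) = tau + n^(-1/2) sum_i V_n(X_i) + sqrt n R(Xbar_n'),   |R(x)| <= (x - mu)^2 / 2,
   where V_n(j) = -p_k(mu) j - I(j <= k) - m_n is centred under the law of X^(n), and the drift
   tau appears exactly because sqrt n P(A_n^c) = lam.  The remainder has expectation O(n^(-1/2)).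
   The centred triangular array satisfies a Lindeberg-type condition, so by Levy's continuity
   theorem its normalised sum tends to N(0, sigma^2), where sigma^2 is the Poisson(mu) variance
   of -p_k(mu) X - I(X <= k): the contamination has weight lam / sqrt n and does not reach the
   limit.
   For k*_n, the criterion already holds at k = 0 whenever Xbar_n' <= ln n / 4, and by Markov's
   inequality this fails with probability at most 4 mu / ln n; so U_n^(k*_n) - U_n^(0) -> 0 in
   probability, and Slutsky's lemma transfers the limit of U_n^(0). *)

section \<open>Weak convergence\<close>

lemma cts_step_bounds:
  assumes "x < y"
  shows "0 \<le> cts_step x y v" "cts_step x y v \<le> 1"
  using assms by (auto simp: cts_step_def field_split_simps)

lemma cts_step_diff_le:
  assumes "x < y"
  shows "\<bar>cts_step x y a - cts_step x y b\<bar> \<le> max 1 (1 / (y - x)) * min 1 \<bar>a - b\<bar>"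
proof (cases "\<bar>a - b\<bar> \<le> 1")
  case True
  have "\<bar>cts_step x y a - cts_step x y b\<bar> \<le> \<bar>a - b\<bar> / (y - x)"
    using assms by (auto simp: cts_step_def divide_simps abs_if)
  also have "\<dots> \<le> max 1 (1 / (y - x)) * \<bar>a - b\<bar>"
    by (metis abs_ge_zero max.cobounded2 mult_right_mono times_divide_eq_left mult_1)
  finally show ?thesis using True by (simp add: min_def)
next
  case False
  then show ?thesis
    using cts_step_bounds[OF assms, of a] cts_step_bounds[OF assms, of b] by (simp add: min_def)
qed

lemma cts_step_borel_measurable: "x < y \<Longrightarrow> cts_step x y \<in> borel_measurable borel"
  by (intro borel_measurable_continuous_onI uniformly_continuous_imp_continuous cts_step_uniformly_continuous)

lemma integral_cts_step_diff_le:
  fixes W Z :: "'a \<Rightarrow> real"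
  assumes "prob_space M" "x < y"
    and W: "W \<in> borel_measurable M" and Z: "Z \<in> borel_measurable M"
  shows "\<bar>(\<integral>\<omega>. cts_step x y (W \<omega>) \<partial>M) - (\<integral>\<omega>. cts_step x y (Z \<omega>) \<partial>M)\<bar>
      \<le> max 1 (1 / (y - x)) * (\<integral>\<omega>. min 1 \<bar>W \<omega> - Z \<omega>\<bar> \<partial>M)"
proof -
  interpret prob_space M by fact
  have int_step: "integrable M (\<lambda>\<omega>. cts_step x y (X \<omega>))" if "X \<in> borel_measurable M" for X
    by (rule integrable_const_bound[where B=1])
      (use measurable_compose[OF that cts_step_borel_measurable[OF \<open>x < y\<close>]]
          cts_step_bounds[OF \<open>x < y\<close>] in auto)
  have int_dist: "integrable M (\<lambda>\<omega>. min 1 \<bar>W \<omega> - Z \<omega>\<bar>)"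
    by (rule integrable_const_bound[where B=1])
      (auto intro!: borel_measurable_min borel_measurable_abs borel_measurable_diff W Z)
  have "\<bar>(\<integral>\<omega>. cts_step x y (W \<omega>) \<partial>M) - (\<integral>\<omega>. cts_step x y (Z \<omega>) \<partial>M)\<bar>
      = \<bar>\<integral>\<omega>. cts_step x y (W \<omega>) - cts_step x y (Z \<omega>) \<partial>M\<bar>"
    using int_step[OF W] int_step[OF Z] by simp
  also have "\<dots> \<le> (\<integral>\<omega>. \<bar>cts_step x y (W \<omega>) - cts_step x y (Z \<omega>)\<bar> \<partial>M)"
    by (rule integral_abs_bound)
  also have "\<dots> \<le> (\<integral>\<omega>. max 1 (1 / (y - x)) * min 1 \<bar>W \<omega> - Z \<omega>\<bar> \<partial>M)"
    using int_step[OF W] int_step[OF Z] int_dist cts_step_diff_le[OF \<open>x < y\<close>]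
    by (intro integral_mono) auto
  finally show ?thesis by simp
qed

text \<open>The hypothesis \<open>close\<close> is convergence in probability of \<open>W n - Z n\<close> to \<open>0\<close>.\<close>

lemma slutsky_weak_conv_m:
  fixes M :: "nat \<Rightarrow> 'a measure" and W Z :: "nat \<Rightarrow> 'a \<Rightarrow> real"
  assumes M: "\<And>n. prob_space (M n)"
    and W: "\<And>n. W n \<in> borel_measurable (M n)" and Z: "\<And>n. Z n \<in> borel_measurable (M n)"
    and L: "real_distribution L"
    and Z_conv: "weak_conv_m (\<lambda>n. distr (M n) borel (Z n)) L"
    and close: "(\<lambda>n. \<integral>\<omega>. min 1 \<bar>W n \<omega> - Z n \<omega>\<bar> \<partial>M n) \<longlonglongrightarrow> 0"
  shows "weak_conv_m (\<lambda>n. distr (M n) borel (W n)) L"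
proof (rule integral_cts_step_conv_imp_weak_conv)
  have distr: "real_distribution (distr (M n) borel X)" if "X \<in> borel_measurable (M n)" for n X
    using M[of n] that
    by (simp add: real_distribution_def real_distribution_axioms_def prob_space.prob_space_distr)
  show "real_distribution (distr (M n) borel (W n))" for n
    by (rule distr[OF W])
  show "real_distribution L" by fact
  fix x y :: real
  assume "x < y"
  have integral_distr_step:
    "integral\<^sup>L (distr (M n) borel X) (cts_step x y) = (\<integral>\<omega>. cts_step x y (X \<omega>) \<partial>M n)"
    if "X \<in> borel_measurable (M n)" for n X
    using cts_step_borel_measurable[OF \<open>x < y\<close>] that by (simp add: integral_distr)
  have "(\<lambda>n. integral\<^sup>L (distr (M n) borel (Z n)) (cts_step x y)) \<longlonglongrightarrow> integral\<^sup>L L (cts_step x y)"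
  proof (rule weak_conv_imp_integral_bdd_continuous_conv[where B=1, OF distr[OF Z] L Z_conv])
    show "isCont (cts_step x y) v" for v
      using cts_step_uniformly_continuous[OF \<open>x < y\<close>]
      by (meson UNIV_I continuous_on_eq_continuous_at open_UNIV uniformly_continuous_imp_continuous)
    show "norm (cts_step x y v) \<le> 1" for v
      using cts_step_bounds[OF \<open>x < y\<close>] by (simp add: abs_le_iff)
  qed
  then have Z_step: "(\<lambda>n. \<integral>\<omega>. cts_step x y (Z n \<omega>) \<partial>M n) \<longlonglongrightarrow> integral\<^sup>L L (cts_step x y)"
    by (simp add: integral_distr_step[OF Z])
  have "(\<lambda>n. (\<integral>\<omega>. cts_step x y (W n \<omega>) \<partial>M n) - (\<integral>\<omega>. cts_step x y (Z n \<omega>) \<partial>M n)) \<longlonglongrightarrow> 0"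
  proof (rule Lim_null_comparison)
    show "eventually (\<lambda>n. norm ((\<integral>\<omega>. cts_step x y (W n \<omega>) \<partial>M n) - (\<integral>\<omega>. cts_step x y (Z n \<omega>) \<partial>M n))
        \<le> max 1 (1 / (y - x)) * (\<integral>\<omega>. min 1 \<bar>W n \<omega> - Z n \<omega>\<bar> \<partial>M n)) sequentially"
      using integral_cts_step_diff_le[OF M \<open>x < y\<close> W Z] by (intro always_eventually) simp
    show "(\<lambda>n. max 1 (1 / (y - x)) * (\<integral>\<omega>. min 1 \<bar>W n \<omega> - Z n \<omega>\<bar> \<partial>M n)) \<longlonglongrightarrow> 0"
      using tendsto_mult_right_zero[OF close] .
  qed
  from tendsto_add[OF this Z_step]
  show "(\<lambda>n. integral\<^sup>L (distr (M n) borel (W n)) (cts_step x y)) \<longlonglongrightarrow> integral\<^sup>L L (cts_step x y)"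
    by (simp add: integral_distr_step[OF W])
qed

lemma weak_conv_m_distr_continuous:
  fixes M :: "nat \<Rightarrow> real measure" and h :: "real \<Rightarrow> real"
  assumes M: "\<And>n. real_distribution (M n)" and L: "real_distribution L"
    and conv: "weak_conv_m M L" and h: "\<And>x. isCont h x"
  shows "weak_conv_m (\<lambda>n. distr (M n) borel h) (distr L borel h)"
proof -
  have h_meas: "h \<in> borel_measurable borel"
    using h by (intro borel_measurable_continuous_onI continuous_at_imp_continuous_on) auto
  have distr: "real_distribution (distr N borel h)" if "real_distribution N" for N
  proof -
    interpret real_distribution N by fact
    show ?thesis
      unfolding real_distribution_def real_distribution_axioms_def
      using h_meas by (simp add: prob_space_distr)
  qed
  show ?thesis
  proof (rule integral_bdd_continuous_conv_imp_weak_conv)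
    show "real_distribution (distr (M n) borel h)" for n by (rule distr[OF M])
    show "real_distribution (distr L borel h)" by (rule distr[OF L])
    fix f :: "real \<Rightarrow> real"
    assume f: "\<And>x. isCont f x" and f_bdd: "\<And>x. \<bar>f x\<bar> \<le> 1"
    have f_meas: "f \<in> borel_measurable borel"
      using f by (intro borel_measurable_continuous_onI continuous_at_imp_continuous_on) auto
    have "(\<lambda>n. integral\<^sup>L (M n) (\<lambda>x. f (h x))) \<longlonglongrightarrow> integral\<^sup>L L (\<lambda>x. f (h x))"
      by (rule weak_conv_imp_integral_bdd_continuous_conv[where B=1, OF M L conv isCont_o2[OF h f]])
        (simp add: f_bdd)
    moreover have "integral\<^sup>L (distr N borel h) f = integral\<^sup>L N (\<lambda>x. f (h x))"
      if "real_distribution N" for N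
    proof -
      interpret real_distribution N by fact
      show ?thesis using h_meas f_meas by (simp add: integral_distr)
    qed
    ultimately show "(\<lambda>n. integral\<^sup>L (distr (M n) borel h) f) \<longlonglongrightarrow> integral\<^sup>L (distr L borel h) f"
      using M L by simp
  qed
qed

lemma distr_std_normal_affine:
  assumes "s > 0"
  shows "distr std_normal_distribution borel (\<lambda>x. m + s * x) = normal_measure m (s\<^sup>2)"
proof -
  interpret std: prob_space std_normal_distribution
    by (rule prob_space_normal_density) simp
  have "distributed std_normal_distribution lborel (\<lambda>x. x) (normal_density 0 1)"
    unfolding distributed_def by (simp add: distr_id2)
  from std.normal_density_affine[OF this, where \<alpha>=s and \<beta>=m] assms
  have "distr std_normal_distribution lborel (\<lambda>x. m + s * x) = density lborel (normal_density m s)"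
    by (simp add: distributed_def)
  moreover have "distr std_normal_distribution borel (\<lambda>x. m + s * x)
      = distr std_normal_distribution lborel (\<lambda>x. m + s * x)"
    by (rule distr_cong) auto
  ultimately show ?thesis
    using assms by (simp add: normal_measure_def)
qed

lemma real_distribution_normal_measure:
  assumes "s2 > 0"
  shows "real_distribution (normal_measure m s2)"
  using assms prob_space_normal_density[of "sqrt s2" m]
  by (simp add: normal_measure_def real_distribution_def real_distribution_axioms_def)

lemma integrable_measure_pmf_iff_count_space:
  fixes h :: "'a \<Rightarrow> real"
  shows "integrable (measure_pmf p) h \<longleftrightarrow> integrable (count_space UNIV) (\<lambda>j. pmf p j * h j)"
  unfolding measure_pmf_eq_density by (subst integrable_density) auto

lemma integral_measure_pmf_count_space:
  fixes h :: "'a \<Rightarrow> real"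
  shows "measure_pmf.expectation p h = integral\<^sup>L (count_space UNIV) (\<lambda>j. pmf p j * h j)"
  unfolding measure_pmf_eq_density by (subst integral_density) auto

definition mix_pmf :: "real \<Rightarrow> 'a pmf \<Rightarrow> 'a pmf \<Rightarrow> 'a pmf" where
  "mix_pmf q P Q = bind_pmf (bernoulli_pmf q) (\<lambda>a. if a then P else Q)"

lemma pmf_mix_pmf:
  assumes "0 \<le> q" "q \<le> 1"
  shows "pmf (mix_pmf q P Q) j = q * pmf P j + (1 - q) * pmf Q j"
  using assms by (simp add: mix_pmf_def pmf_bind)

lemma integrable_mix_pmf:
  fixes h :: "'a \<Rightarrow> real"
  assumes q: "0 \<le> q" "q \<le> 1"
    and "integrable (measure_pmf P) h" "integrable (measure_pmf Q) h"
  shows "integrable (measure_pmf (mix_pmf q P Q)) h"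
proof -
  have "integrable (count_space UNIV) (\<lambda>j. q * (pmf P j * h j) + (1 - q) * (pmf Q j * h j))"
    using assms
    by (intro Bochner_Integration.integrable_add integrable_mult_right)
      (auto simp: integrable_measure_pmf_iff_count_space)
  then show ?thesis
    by (simp add: integrable_measure_pmf_iff_count_space pmf_mix_pmf[OF q] algebra_simps)
qed

lemma integral_mix_pmf:
  fixes h :: "'a \<Rightarrow> real"
  assumes q: "0 \<le> q" "q \<le> 1"
    and "integrable (measure_pmf P) h" "integrable (measure_pmf Q) h"
  shows "measure_pmf.expectation (mix_pmf q P Q) h
       = q * measure_pmf.expectation P h + (1 - q) * measure_pmf.expectation Q h"
proof -
  have P: "integrable (count_space UNIV) (\<lambda>j. q * (pmf P j * h j))"
    and Q: "integrable (count_space UNIV) (\<lambda>j. (1 - q) * (pmf Q j * h j))"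
    using assms by (auto intro!: integrable_mult_right simp: integrable_measure_pmf_iff_count_space)
  have "measure_pmf.expectation (mix_pmf q P Q) h
      = integral\<^sup>L (count_space UNIV) (\<lambda>j. q * (pmf P j * h j) + (1 - q) * (pmf Q j * h j))"
    by (simp add: integral_measure_pmf_count_space pmf_mix_pmf[OF q] algebra_simps)
  also have "\<dots> = q * measure_pmf.expectation P h + (1 - q) * measure_pmf.expectation Q h"
    using P Q by (simp add: integral_measure_pmf_count_space)
  finally show ?thesis .
qed

lemma Xn_pmf_eq_mix_pmf: "Xn_pmf lam mu Y n = mix_pmf (1 - lam / sqrt (real n)) (poisson_pmf mu) Y"
  by (simp add: Xn_pmf_def mix_pmf_def)

lemma expectation_indicator_atMost:
  fixes p :: "nat pmf"
  shows "measure_pmf.expectation p (\<lambda>j. of_bool (j \<le> k) :: real) = measure_pmf.prob p {..k}"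
proof -
  have "measure_pmf.expectation p (\<lambda>j. of_bool (j \<le> k) :: real) = (\<Sum>a\<le>k. of_bool (a \<le> k) * pmf p a)"
    by (rule integral_measure_pmf_real) auto
  also have "\<dots> = measure_pmf.prob p {..k}"
    by (simp add: measure_measure_pmf_finite)
  finally show ?thesis .
qed

lemma (in prob_space) expectation_square_diff_const:
  fixes g :: "'a \<Rightarrow> real"
  assumes g: "integrable M g" and g2: "integrable M (\<lambda>x. (g x)\<^sup>2)"
  shows "integrable M (\<lambda>x. (g x - m)\<^sup>2)"
    "expectation (\<lambda>x. (g x - m)\<^sup>2) = expectation (\<lambda>x. (g x)\<^sup>2) - 2 * m * expectation g + m\<^sup>2"
proof -
  have sq: "(g x - m)\<^sup>2 = (g x)\<^sup>2 - 2 * m * g x + m\<^sup>2" for x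
    by (simp add: power2_diff)
  show "integrable M (\<lambda>x. (g x - m)\<^sup>2)"
    unfolding sq using g g2 by auto
  show "expectation (\<lambda>x. (g x - m)\<^sup>2) = expectation (\<lambda>x. (g x)\<^sup>2) - 2 * m * expectation g + m\<^sup>2"
    unfolding sq using g g2 by (simp add: prob_space)
qed

definition pk :: "nat \<Rightarrow> real \<Rightarrow> real" where
  "pk k m = exp (- m) * m ^ k / fact k"

lemma pk_eq_pmf_poisson: "m > 0 \<Longrightarrow> pk k m = pmf (poisson_pmf m) k"
  by (simp add: pk_def)

lemma fk_Suc: "fk (Suc k) m = fk k m + pk (Suc k) m"
  by (simp add: fk_def pk_def algebra_simps)

lemma DERIV_pk: "(pk k has_real_derivative (if k = 0 then 0 else pk (k - 1) m) - pk k m) (at m)"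
proof (cases k)
  case 0
  then show ?thesis
    by (auto simp: pk_def[abs_def] intro!: derivative_eq_intros)
next
  case (Suc j)
  have "((\<lambda>m. exp (- m)) has_real_derivative - exp (- m)) (at m)"
    by (auto intro!: derivative_eq_intros)
  moreover have "((\<lambda>m. m ^ Suc j) has_real_derivative real (Suc j) * m ^ j) (at m)"
    using DERIV_pow[of "Suc j" m] by simp
  ultimately have "((\<lambda>m. exp (- m) * m ^ Suc j / fact (Suc j)) has_real_derivative
      (- exp (- m) * m ^ Suc j + real (Suc j) * m ^ j * exp (- m)) / fact (Suc j)) (at m)"
    by (intro DERIV_cdivide DERIV_mult)
  moreover have "(- exp (- m) * m ^ Suc j + real (Suc j) * m ^ j * exp (- m)) / fact (Suc j)
      = pk j m - pk (Suc j) m"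
    by (simp add: pk_def field_simps del: of_nat_Suc)
  ultimately show ?thesis
    using Suc by (simp add: pk_def[abs_def])
qed

lemma DERIV_fk: "(fk k has_real_derivative - pk k m) (at m)"
proof (induction k)
  case 0
  have "fk 0 = (\<lambda>m. exp (- m))"
    by (auto simp: fk_def)
  then show ?case
    by (auto simp: pk_def intro!: derivative_eq_intros)
next
  case (Suc k)
  have "((\<lambda>m. fk k m + pk (Suc k) m) has_real_derivative - pk k m + (pk k m - pk (Suc k) m)) (at m)"
    using Suc.IH DERIV_pk[of "Suc k" m] by (intro DERIV_add) simp_all
  then show ?case
    by (simp add: fk_Suc[abs_def])
qed

lemma fk_linearization_error:
  assumes x: "x \<ge> 0" and mu: "mu > 0"
  shows "\<bar>fk k x - fk k mu + pk k mu * (x - mu)\<bar> \<le> (x - mu)\<^sup>2 / 2"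
proof (cases "x = mu")
  case False
  define pk' where "pk' m = (if k = 0 then 0 else pk (k - 1) m) - pk k m" for m
  define diff where
    "diff i = (if i = 0 then fk k else if i = 1 then (\<lambda>m. - pk k m) else (\<lambda>m. - pk' m))" for i :: nat
  have "\<exists>t. (if x < mu then x < t \<and> t < mu else mu < t \<and> t < x) \<and>
      fk k x = (\<Sum>i<2. diff i mu / fact i * (x - mu) ^ i) + diff 2 t / fact 2 * (x - mu) ^ 2"
  proof (rule Taylor[of 2 diff "fk k" "min x mu" "max x mu"])
    show "\<forall>i t. i < 2 \<and> min x mu \<le> t \<and> t \<le> max x mu \<longrightarrow> (diff i has_real_derivative diff (Suc i) t) (at t)"
      using DERIV_fk[of k] DERIV_minus[OF DERIV_pk[of k]]
      by (auto simp: diff_def pk'_def less_2_cases_iff)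
  qed (use False in \<open>auto simp: diff_def\<close>)
  then obtain t where t: "if x < mu then x < t \<and> t < mu else mu < t \<and> t < x"
    and taylor: "fk k x = (\<Sum>i<2. diff i mu / fact i * (x - mu) ^ i) + diff 2 t / fact 2 * (x - mu) ^ 2"
    by blast
  have "t > 0"
    using t x mu by (auto split: if_splits)
  \<comment> \<open>\<open>pk' t\<close> is a difference of two Poisson probabilities\<close>
  then have "0 \<le> pk j t" "pk j t \<le> 1" for j
    unfolding pk_eq_pmf_poisson[OF \<open>t > 0\<close>] by (simp_all del: pmf_poisson add: pmf_le_1)
  then have "\<bar>pk' t\<bar> \<le> 1"
    unfolding pk'_def by (smt (verit))
  moreover have "fk k x - fk k mu + pk k mu * (x - mu) = - pk' t / 2 * (x - mu)\<^sup>2"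
    using taylor by (simp add: diff_def numeral_2_eq_2)
  ultimately show ?thesis
    using mult_right_mono[of "\<bar>pk' t\<bar>" 1 "(x - mu)\<^sup>2"] by (simp add: abs_mult)
qed simp

lemma exp_sums_real: "(\<lambda>j. x ^ j / fact j) sums exp (x::real)"
  using exp_converges[of x] by (simp add: divide_inverse mult.commute scaleR_conv_of_real)

lemma exp_sums_index: "(\<lambda>j. x ^ j / fact j * real j) sums (x * exp (x::real))"
proof -
  have "(\<lambda>i. x ^ Suc i / fact (Suc i) * real (Suc i)) = (\<lambda>i. x * (x ^ i / fact i))"
    by (rule ext) (simp add: field_simps del: of_nat_Suc)
  then have "(\<lambda>i. x ^ Suc i / fact (Suc i) * real (Suc i)) sums (x * exp x)"
    using sums_mult[OF exp_sums_real] by simp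
  then show ?thesis
    by (subst (asm) sums_Suc_iff) simp
qed

lemma exp_sums_index_square: "(\<lambda>j. x ^ j / fact j * (real j)\<^sup>2) sums ((x\<^sup>2 + x) * exp (x::real))"
proof -
  have "(\<lambda>i. x ^ Suc i / fact (Suc i) * (real (Suc i))\<^sup>2)
      = (\<lambda>i. x * (x ^ i / fact i * real i + x ^ i / fact i))"
    by (rule ext) (simp add: field_simps power2_eq_square del: of_nat_Suc, simp add: algebra_simps)
  moreover have "(\<lambda>i. x * (x ^ i / fact i * real i + x ^ i / fact i)) sums (x * (x * exp x + exp x))"
    by (intro sums_mult sums_add exp_sums_index exp_sums_real)
  ultimately have "(\<lambda>i. x ^ Suc i / fact (Suc i) * (real (Suc i))\<^sup>2) sums ((x\<^sup>2 + x) * exp x)"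
    by (simp add: algebra_simps power2_eq_square)
  then show ?thesis
    by (subst (asm) sums_Suc_iff) simp
qed

lemma poisson_pmf_expectation_sums:
  fixes h :: "nat \<Rightarrow> real"
  assumes mu: "mu > 0" and h: "\<And>j. h j \<ge> 0"
    and sums: "(\<lambda>j. mu ^ j / fact j * h j) sums s"
  shows "integrable (measure_pmf (poisson_pmf mu)) h"
    "measure_pmf.expectation (poisson_pmf mu) h = exp (- mu) * s"
proof -
  have sums': "(\<lambda>j. pmf (poisson_pmf mu) j * h j) sums (exp (- mu) * s)"
    using sums_mult[OF sums, of "exp (- mu)"] mu by (simp add: algebra_simps)
  have int: "integrable (count_space UNIV) (\<lambda>j. pmf (poisson_pmf mu) j * h j)"
    unfolding integrable_count_space_nat_iff
    using sums' h mu by (simp add: abs_mult sums_summable)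
  then show "integrable (measure_pmf (poisson_pmf mu)) h"
    by (simp add: integrable_measure_pmf_iff_count_space)
  show "measure_pmf.expectation (poisson_pmf mu) h = exp (- mu) * s"
    using int sums' by (simp add: integral_measure_pmf_count_space integral_count_space_nat sums_iff)
qed

lemma poisson_pmf_first_moment:
  assumes "mu > 0"
  shows "integrable (measure_pmf (poisson_pmf mu)) real"
    "measure_pmf.expectation (poisson_pmf mu) real = mu"
proof -
  have "exp (- mu) * (mu * exp mu) = mu"
    by (simp add: exp_minus)
  then show "integrable (measure_pmf (poisson_pmf mu)) real"
    "measure_pmf.expectation (poisson_pmf mu) real = mu"
    using poisson_pmf_expectation_sums[OF assms, of real, OF _ exp_sums_index] by auto
qed

lemma poisson_pmf_second_moment:
  assumes "mu > 0"
  shows "integrable (measure_pmf (poisson_pmf mu)) (\<lambda>j. (real j)\<^sup>2)"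
    "measure_pmf.expectation (poisson_pmf mu) (\<lambda>j. (real j)\<^sup>2) = mu\<^sup>2 + mu"
proof -
  have "exp (- mu) * ((mu\<^sup>2 + mu) * exp mu) = mu\<^sup>2 + mu"
    by (simp add: exp_minus)
  then show "integrable (measure_pmf (poisson_pmf mu)) (\<lambda>j. (real j)\<^sup>2)"
    "measure_pmf.expectation (poisson_pmf mu) (\<lambda>j. (real j)\<^sup>2) = mu\<^sup>2 + mu"
    using poisson_pmf_expectation_sums[OF assms, of "\<lambda>j. (real j)\<^sup>2", OF _ exp_sums_index_square]
    by auto
qed

lemma poisson_pmf_prob_atMost:
  assumes "mu > 0"
  shows "measure_pmf.prob (poisson_pmf mu) {..k} = fk k mu"
  using assms by (simp add: measure_measure_pmf_finite fk_def sum_distrib_left field_simps)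

lemma poisson_pmf_truncated_mean:
  assumes "mu > 0"
  shows "measure_pmf.expectation (poisson_pmf mu) (\<lambda>j. real j * of_bool (j \<le> k))
     = mu * (fk k mu - pk k mu)"
proof -
  have "measure_pmf.expectation (poisson_pmf mu) (\<lambda>j. real j * of_bool (j \<le> k))
      = (\<Sum>j\<le>k. real j * of_bool (j \<le> k) * pmf (poisson_pmf mu) j)"
    by (rule integral_measure_pmf_real) auto
  also have "\<dots> = (\<Sum>j\<le>k. real j * pk j mu)"
    using assms by (intro sum.cong) (auto simp: pk_eq_pmf_poisson)
  also have "\<dots> = mu * (fk k mu - pk k mu)"
  proof (induction k)
    case (Suc k)
    have "real (Suc k) * pk (Suc k) mu = mu * pk k mu"
      by (simp add: pk_def field_simps del: of_nat_Suc)
    with Suc.IH show ?case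
      by (simp add: fk_Suc algebra_simps)
  qed (simp add: fk_def pk_def)
  finally show ?thesis .
qed

lemma map_Pi_pmf_component:
  assumes "i < (n::nat)"
  shows "map_pmf (\<lambda>\<omega>. \<omega> i) (Pi_pmf {..<n} d (\<lambda>_. p)) = p"
  using assms by (subst Pi_pmf_component) auto

lemma integral_Pi_pmf_component:
  fixes h :: "'a \<Rightarrow> 'b::{banach, second_countable_topology}"
  assumes "i < (n::nat)"
  shows "measure_pmf.expectation (Pi_pmf {..<n} d (\<lambda>_. p)) (\<lambda>\<omega>. h (\<omega> i)) = measure_pmf.expectation p h"
proof -
  have "measure_pmf.expectation p h
      = measure_pmf.expectation (map_pmf (\<lambda>\<omega>. \<omega> i) (Pi_pmf {..<n} d (\<lambda>_. p))) h"
    by (simp add: map_Pi_pmf_component[OF assms])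
  also have "\<dots> = measure_pmf.expectation (Pi_pmf {..<n} d (\<lambda>_. p)) (\<lambda>\<omega>. h (\<omega> i))"
    by (rule integral_map_pmf)
  finally show ?thesis ..
qed

lemma integrable_Pi_pmf_component_iff:
  fixes h :: "'a \<Rightarrow> 'b::{banach, second_countable_topology}"
  assumes "i < (n::nat)"
  shows "integrable (measure_pmf (Pi_pmf {..<n} d (\<lambda>_. p))) (\<lambda>\<omega>. h (\<omega> i)) \<longleftrightarrow> integrable (measure_pmf p) h"
proof -
  have "integrable (measure_pmf p) h
      \<longleftrightarrow> integrable (measure_pmf (map_pmf (\<lambda>\<omega>. \<omega> i) (Pi_pmf {..<n} d (\<lambda>_. p)))) h"
    by (simp add: map_Pi_pmf_component[OF assms])
  also have "\<dots> \<longleftrightarrow> integrable (measure_pmf (Pi_pmf {..<n} d (\<lambda>_. p))) (\<lambda>\<omega>. h (\<omega> i))"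
    by (rule integrable_map_pmf_eq)
  finally show ?thesis ..
qed

lemma indep_vars_Pi_pmf_compose:
  fixes h :: "'i \<Rightarrow> 'a \<Rightarrow> 'b::topological_space"
  assumes "finite I"
  shows "prob_space.indep_vars (measure_pmf (Pi_pmf I d p)) (\<lambda>_. borel) (\<lambda>i \<omega>. h i (\<omega> i)) I"
  using prob_space.indep_vars_compose2[OF measure_pmf.prob_space_axioms indep_vars_Pi_pmf[OF assms],
      of h "\<lambda>_. borel"]
  by simp

lemma integral_Pi_pmf_components_mult:
  fixes D :: "'a \<Rightarrow> real" and i j n :: nat
  assumes ij: "i < n" "j < n" "i \<noteq> j"
    and D: "integrable (measure_pmf p) D" "measure_pmf.expectation p D = 0"
  shows "integrable (measure_pmf (Pi_pmf {..<n} d (\<lambda>_. p))) (\<lambda>\<omega>. D (\<omega> i) * D (\<omega> j))"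
    "measure_pmf.expectation (Pi_pmf {..<n} d (\<lambda>_. p)) (\<lambda>\<omega>. D (\<omega> i) * D (\<omega> j)) = 0"
proof -
  let ?M = "measure_pmf (Pi_pmf {..<n} d (\<lambda>_. p))"
  have indep: "prob_space.indep_vars ?M (\<lambda>_. borel) (\<lambda>l \<omega>. D (\<omega> l)) {i, j}"
    by (rule prob_space.indep_vars_subset[OF measure_pmf.prob_space_axioms
        indep_vars_Pi_pmf_compose[where I="{..<n}" and h="\<lambda>_. D"]]) (use ij in auto)
  have int: "integrable ?M (\<lambda>\<omega>. D (\<omega> l))" if "l \<in> {i, j}" for l
    using that ij integrable_Pi_pmf_component_iff[where i=l and h=D] D by auto
  have "integrable ?M (\<lambda>\<omega>. \<Prod>l\<in>{i, j}. D (\<omega> l))"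
    by (rule prob_space.indep_vars_integrable[OF measure_pmf.prob_space_axioms _ indep int]) auto
  then show "integrable ?M (\<lambda>\<omega>. D (\<omega> i) * D (\<omega> j))"
    using ij by simp
  have "(\<integral>\<omega>. (\<Prod>l\<in>{i, j}. D (\<omega> l)) \<partial>?M) = (\<Prod>l\<in>{i, j}. \<integral>\<omega>. D (\<omega> l) \<partial>?M)"
    by (rule prob_space.indep_vars_lebesgue_integral[OF measure_pmf.prob_space_axioms _ indep int]) auto
  moreover have "(\<integral>\<omega>. D (\<omega> i) \<partial>?M) = 0"
    using integral_Pi_pmf_component[OF ij(1), where h=D] D by simp
  ultimately show "(\<integral>\<omega>. D (\<omega> i) * D (\<omega> j) \<partial>?M) = 0"
    using ij by simp
qed

lemma integral_Pi_pmf_sum_square: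
  fixes D :: "'a \<Rightarrow> real" and n :: nat
  assumes D2: "integrable (measure_pmf p) (\<lambda>j. (D j)\<^sup>2)" and D0: "measure_pmf.expectation p D = 0"
  shows "integrable (measure_pmf (Pi_pmf {..<n} d (\<lambda>_. p))) (\<lambda>\<omega>. (\<Sum>i<n. D (\<omega> i))\<^sup>2)"
    "measure_pmf.expectation (Pi_pmf {..<n} d (\<lambda>_. p)) (\<lambda>\<omega>. (\<Sum>i<n. D (\<omega> i))\<^sup>2)
       = real n * measure_pmf.expectation p (\<lambda>j. (D j)\<^sup>2)"
proof -
  let ?M = "measure_pmf (Pi_pmf {..<n} d (\<lambda>_. p))"
  have D: "integrable (measure_pmf p) D"
    by (rule measure_pmf.square_integrable_imp_integrable[OF _ D2]) simp
  have pair: "integrable ?M (\<lambda>\<omega>. D (\<omega> i) * D (\<omega> j)) \<and>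
      (\<integral>\<omega>. D (\<omega> i) * D (\<omega> j) \<partial>?M) = (if i = j then measure_pmf.expectation p (\<lambda>j. (D j)\<^sup>2) else 0)"
    if "i < n" "j < n" for i j
  proof (cases "i = j")
    case True
    then show ?thesis
      using that integrable_Pi_pmf_component_iff[where h="\<lambda>j. (D j)\<^sup>2"]
        integral_Pi_pmf_component[where h="\<lambda>j. (D j)\<^sup>2"] D2
      by (simp add: power2_eq_square)
  next
    case False
    then show ?thesis
      using integral_Pi_pmf_components_mult[OF that False D D0] by simp
  qed
  have sq: "(\<Sum>i<n. D (\<omega> i))\<^sup>2 = (\<Sum>i<n. \<Sum>j<n. D (\<omega> i) * D (\<omega> j))" for \<omega>
    by (simp add: power2_eq_square sum_product)
  show "integrable ?M (\<lambda>\<omega>. (\<Sum>i<n. D (\<omega> i))\<^sup>2)"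
    unfolding sq using pair by (intro Bochner_Integration.integrable_sum) auto
  have "(\<integral>\<omega>. (\<Sum>i<n. D (\<omega> i))\<^sup>2 \<partial>?M) = (\<Sum>i<n. \<Sum>j<n. \<integral>\<omega>. D (\<omega> i) * D (\<omega> j) \<partial>?M)"
    unfolding sq using pair
    by (subst Bochner_Integration.integral_sum)
      (auto intro!: sum.cong Bochner_Integration.integral_sum Bochner_Integration.integrable_sum)
  also have "\<dots> = (\<Sum>i<n. \<Sum>j<n. if i = j then measure_pmf.expectation p (\<lambda>j. (D j)\<^sup>2) else 0)"
    using pair by (intro sum.cong refl) auto
  finally show "(\<integral>\<omega>. (\<Sum>i<n. D (\<omega> i))\<^sup>2 \<partial>?M) = real n * measure_pmf.expectation p (\<lambda>j. (D j)\<^sup>2)"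
    by simp
qed

section \<open>A central limit theorem for triangular arrays\<close>

lemma tendsto_power_one_plus_div_exp:
  fixes a :: "nat \<Rightarrow> real"
  assumes a: "a \<longlonglongrightarrow> A" and nonpos: "\<And>n. a n \<le> 0"
  shows "(\<lambda>n. (1 + a n / real n) ^ n) \<longlonglongrightarrow> exp A"
proof -
  have "A \<le> 0"
    using a nonpos by (intro LIMSEQ_le_const2[OF a]) auto
  have "eventually (\<lambda>n. \<bar>a n - A\<bar> < 1) sequentially"
    using a unfolding tendsto_iff dist_real_def by auto
  moreover have "eventually (\<lambda>n. real n \<ge> 1 - A) sequentially"
    by (rule eventually_sequentiallyI[of "nat \<lceil>1 - A\<rceil>"]) linarith
  ultimately have bound: "eventually (\<lambda>n. norm ((1 + a n / real n) ^ n - (1 + A / real n) ^ n)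
      \<le> \<bar>a n - A\<bar>) sequentially"
  proof eventually_elim
    case (elim n)
    then have n: "real n > 0" "a n \<ge> - real n" "A \<ge> - real n"
      using \<open>A \<le> 0\<close> by linarith+
    have "\<bar>1 + a n / real n\<bar> \<le> 1" "\<bar>1 + A / real n\<bar> \<le> 1"
      using n nonpos[of n] \<open>A \<le> 0\<close> by (auto simp: abs_le_iff field_simps)
    then have "norm ((1 + a n / real n) ^ n - (1 + A / real n) ^ n)
        \<le> real n * norm ((1 + a n / real n) - (1 + A / real n))"
      by (intro norm_power_diff) auto
    also have "\<dots> = \<bar>a n - A\<bar>"
      using n by (simp add: diff_divide_distrib[symmetric] abs_divide)
    finally show ?case .
  qed
  have "(\<lambda>n. \<bar>a n - A\<bar>) \<longlonglongrightarrow> 0"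
    using LIM_zero[OF a] by (rule tendsto_rabs_zero)
  from Lim_null_comparison[OF bound this] tendsto_exp_limit_sequentially[of A]
  show ?thesis
    by (rule Lim_transform[rotated])
qed

lemma char_distr_std_normal_scale:
  "char (distr std_normal_distribution borel (\<lambda>x. c * x)) t = complex_of_real (exp (- ((t * c)\<^sup>2) / 2))"
proof -
  have "char (distr std_normal_distribution borel (\<lambda>x. c * x)) t
      = (CLINT x|std_normal_distribution. iexp (t * (c * x)))"
    unfolding char_def by (subst integral_distr) auto
  also have "\<dots> = char std_normal_distribution (t * c)"
    unfolding char_def by (simp add: mult.assoc)
  finally show ?thesis
    by (simp add: char_std_normal_distribution)
qed

lemma char_distr_Pi_pmf_sum:
  fixes X :: "'a \<Rightarrow> real"
  shows "char (distr (measure_pmf (Pi_pmf {..<n} d (\<lambda>_. p))) borel (\<lambda>\<omega>. \<Sum>i<n. X (\<omega> i))) t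
       = char (distr (measure_pmf p) borel X) t ^ n"
proof -
  let ?M = "measure_pmf (Pi_pmf {..<n} d (\<lambda>_. p))"
  have indep: "prob_space.indep_vars ?M (\<lambda>_. borel) (\<lambda>i \<omega>. X (\<omega> i)) {..<n}"
    using indep_vars_Pi_pmf_compose[where I="{..<n}" and h="\<lambda>_. X"] by simp
  have "char (distr ?M borel (\<lambda>\<omega>. \<Sum>i<n. X (\<omega> i))) t = (\<Prod>i<n. char (distr ?M borel (\<lambda>\<omega>. X (\<omega> i))) t)"
    by (rule prob_space.char_distr_sum[OF measure_pmf.prob_space_axioms indep])
  also have "\<dots> = (\<Prod>i<n. char (distr (measure_pmf p) borel X) t)"
  proof (intro prod.cong refl)
    fix i
    assume "i \<in> {..<n}"
    then show "char (distr ?M borel (\<lambda>\<omega>. X (\<omega> i))) t = char (distr (measure_pmf p) borel X) t"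
      using integral_Pi_pmf_component[where h="\<lambda>j. iexp (t * X j)" and i=i and n=n]
      unfolding char_def by (simp add: integral_distr)
  qed
  finally show ?thesis
    by simp
qed

lemma char_distr_pmf_scaled_approx:
  fixes p :: "'a pmf" and V :: "'a \<Rightarrow> real" and n :: real
  assumes n: "n > 0"
    and V2: "integrable (measure_pmf p) (\<lambda>j. (V j)\<^sup>2)" and V0: "measure_pmf.expectation p V = 0"
  shows "cmod (char (distr (measure_pmf p) borel (\<lambda>j. V j / sqrt n)) t
            - complex_of_real (1 + (- (t\<^sup>2 * measure_pmf.expectation p (\<lambda>j. (V j)\<^sup>2) / 2)) / n))
       \<le> t\<^sup>2 / 6 * measure_pmf.expectation p (\<lambda>j. min (6 * (V j)\<^sup>2) (\<bar>t\<bar> * \<bar>V j\<bar> ^ 3 / sqrt n)) / n"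
proof -
  let ?X = "\<lambda>j. V j / sqrt n"
  have V: "integrable (measure_pmf p) V"
    by (rule measure_pmf.square_integrable_imp_integrable[OF _ V2]) simp
  have min_eq: "min (6 * (?X j)\<^sup>2) (\<bar>t\<bar> * \<bar>?X j\<bar> ^ 3) = min (6 * (V j)\<^sup>2) (\<bar>t\<bar> * \<bar>V j\<bar> ^ 3 / sqrt n) / n"
    for j
  proof -
    have "sqrt n ^ 2 = n" "sqrt n ^ 3 = n * sqrt n"
      using n by (simp_all add: power3_eq_cube power2_eq_square)
    then have "6 * (?X j)\<^sup>2 = 6 * (V j)\<^sup>2 / n" "\<bar>t\<bar> * \<bar>?X j\<bar> ^ 3 = \<bar>t\<bar> * \<bar>V j\<bar> ^ 3 / sqrt n / n"
      using n by (simp_all add: power_divide abs_divide)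
    then show ?thesis
      using n by (simp add: min_divide_distrib_right)
  qed
  have "cmod (char (distr (measure_pmf p) borel ?X) t
        - complex_of_real (1 - t\<^sup>2 * (measure_pmf.expectation p (\<lambda>j. (V j)\<^sup>2) / n) / 2))
      \<le> t\<^sup>2 / 6 * measure_pmf.expectation p (\<lambda>j. min (6 * (?X j)\<^sup>2) (\<bar>t\<bar> * \<bar>?X j\<bar> ^ 3))"
    using V V2 V0 n
    by (intro prob_space.char_approx3'[OF measure_pmf.prob_space_axioms])
      (simp_all add: power_divide)
  also have "measure_pmf.expectation p (\<lambda>j. min (6 * (?X j)\<^sup>2) (\<bar>t\<bar> * \<bar>?X j\<bar> ^ 3))
      = measure_pmf.expectation p (\<lambda>j. min (6 * (V j)\<^sup>2) (\<bar>t\<bar> * \<bar>V j\<bar> ^ 3 / sqrt n)) / n"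
    unfolding min_eq by simp
  also have "1 - t\<^sup>2 * (measure_pmf.expectation p (\<lambda>j. (V j)\<^sup>2) / n) / 2
      = 1 + (- (t\<^sup>2 * measure_pmf.expectation p (\<lambda>j. (V j)\<^sup>2) / 2)) / n"
    using n by (simp add: field_simps)
  finally show ?thesis
    by (simp only: times_divide_eq_right)
qed

lemma char_distr_Pi_pmf_sum_approx:
  fixes p :: "'a pmf" and V :: "'a \<Rightarrow> real"
  assumes n: "n > 0"
    and V2: "integrable (measure_pmf p) (\<lambda>j. (V j)\<^sup>2)" and V0: "measure_pmf.expectation p V = 0"
    and small: "t\<^sup>2 * measure_pmf.expectation p (\<lambda>j. (V j)\<^sup>2) \<le> 2 * real n"
  shows "cmod (char (distr (measure_pmf (Pi_pmf {..<n} d (\<lambda>_. p))) borel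
              (\<lambda>\<omega>. \<Sum>i<n. V (\<omega> i) / sqrt (real n))) t
            - complex_of_real ((1 + (- (t\<^sup>2 * measure_pmf.expectation p (\<lambda>j. (V j)\<^sup>2) / 2)) / real n) ^ n))
       \<le> t\<^sup>2 / 6 * measure_pmf.expectation p (\<lambda>j. min (6 * (V j)\<^sup>2) (\<bar>t\<bar> * \<bar>V j\<bar> ^ 3 / sqrt (real n)))"
proof -
  let ?\<phi> = "char (distr (measure_pmf p) borel (\<lambda>j. V j / sqrt (real n))) t"
  let ?w = "1 + (- (t\<^sup>2 * measure_pmf.expectation p (\<lambda>j. (V j)\<^sup>2) / 2)) / real n"
  let ?E = "measure_pmf.expectation p (\<lambda>j. min (6 * (V j)\<^sup>2) (\<bar>t\<bar> * \<bar>V j\<bar> ^ 3 / sqrt (real n)))"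
  have "real_distribution (distr (measure_pmf p) borel (\<lambda>j. V j / sqrt (real n)))"
    by (rule prob_space.real_distribution_distr[OF measure_pmf.prob_space_axioms]) simp
  then have "cmod ?\<phi> \<le> 1"
    by (rule real_distribution.cmod_char_le_1)
  moreover have "cmod (complex_of_real ?w) \<le> 1"
    unfolding norm_of_real using n small by (auto simp: abs_le_iff field_simps)
  ultimately have "cmod (?\<phi> ^ n - complex_of_real ?w ^ n) \<le> real n * cmod (?\<phi> - complex_of_real ?w)"
    by (rule norm_power_diff)
  also have "\<dots> \<le> real n * (t\<^sup>2 / 6 * ?E / real n)"
    using char_distr_pmf_scaled_approx[of "real n" p V t] n V2 V0 by (intro mult_left_mono) auto
  also have "\<dots> = t\<^sup>2 / 6 * ?E"
    using n by simp
  finally show ?thesis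
    by (simp only: char_distr_Pi_pmf_sum[where X="\<lambda>j. V j / sqrt (real n)"] of_real_power)

qed

text \<open>The hypothesis \<open>lindeberg\<close> bounds the error term of \<open>char_approx3'\<close>; it plays
  the role of Lindeberg's condition.\<close>

theorem clt_triangular_pmf:
  fixes \<nu> :: "nat \<Rightarrow> 'a pmf" and V :: "nat \<Rightarrow> 'a \<Rightarrow> real" and s :: real
  assumes s: "s > 0"
    and centred: "eventually (\<lambda>n. integrable (measure_pmf (\<nu> n)) (\<lambda>j. (V n j)\<^sup>2)
        \<and> measure_pmf.expectation (\<nu> n) (V n) = 0) sequentially"
    and var: "(\<lambda>n. measure_pmf.expectation (\<nu> n) (\<lambda>j. (V n j)\<^sup>2)) \<longlonglongrightarrow> s"
    and lindeberg: "\<And>t. (\<lambda>n. measure_pmf.expectation (\<nu> n)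
        (\<lambda>j. min (6 * (V n j)\<^sup>2) (\<bar>t\<bar> * \<bar>V n j\<bar> ^ 3 / sqrt (real n)))) \<longlonglongrightarrow> 0"
  shows "weak_conv_m
      (\<lambda>n. distr (measure_pmf (Pi_pmf {..<n} d (\<lambda>_. \<nu> n))) borel (\<lambda>\<omega>. \<Sum>i<n. V n (\<omega> i) / sqrt (real n)))
      (distr std_normal_distribution borel (\<lambda>x. sqrt s * x))"
proof (rule levy_continuity)
  show "real_distribution (distr (measure_pmf (Pi_pmf {..<n} d (\<lambda>_. \<nu> n))) borel
      (\<lambda>\<omega>. \<Sum>i<n. V n (\<omega> i) / sqrt (real n)))" for n
    by (rule prob_space.real_distribution_distr[OF measure_pmf.prob_space_axioms]) simp
  show "real_distribution (distr std_normal_distribution borel (\<lambda>x. sqrt s * x))"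
    by (rule prob_space.real_distribution_distr[OF prob_space_normal_density]) auto
  fix t :: real
  define \<phi> where "\<phi> n = char (distr (measure_pmf (Pi_pmf {..<n} d (\<lambda>_. \<nu> n))) borel
      (\<lambda>\<omega>. \<Sum>i<n. V n (\<omega> i) / sqrt (real n))) t" for n
  define s' where "s' n = measure_pmf.expectation (\<nu> n) (\<lambda>j. (V n j)\<^sup>2)" for n
  define L where "L n = t\<^sup>2 / 6 * measure_pmf.expectation (\<nu> n)
      (\<lambda>j. min (6 * (V n j)\<^sup>2) (\<bar>t\<bar> * \<bar>V n j\<bar> ^ 3 / sqrt (real n)))" for n
  have "eventually (\<lambda>n. s' n \<le> s + 1) sequentially"
    using var unfolding s'_def[symmetric] tendsto_iff dist_real_def
    by (auto elim!: allE[of _ 1] eventually_mono)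
  with centred have "eventually (\<lambda>n. cmod (\<phi> n - complex_of_real ((1 + (- (t\<^sup>2 * s' n / 2)) / real n) ^ n))
      \<le> L n) sequentially"
    using eventually_gt_at_top[of 0] eventually_ge_at_top[of "nat \<lceil>t\<^sup>2 * (s + 1)\<rceil>"]
  proof eventually_elim
    case (elim n)
    have "t\<^sup>2 * s' n \<le> t\<^sup>2 * (s + 1)"
      using elim(2) by (intro mult_left_mono) auto
    then have "t\<^sup>2 * s' n \<le> 2 * real n"
      using elim(4) s by linarith
    then show ?case
      unfolding \<phi>_def s'_def L_def
      by (rule char_distr_Pi_pmf_sum_approx[OF elim(3) conjunct1[OF elim(1)] conjunct2[OF elim(1)]])
  qed
  moreover have "L \<longlonglongrightarrow> 0"
    unfolding L_def[abs_def] using tendsto_mult_right_zero[OF lindeberg[of t]] .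
  ultimately have "(\<lambda>n. \<phi> n - complex_of_real ((1 + (- (t\<^sup>2 * s' n / 2)) / real n) ^ n)) \<longlonglongrightarrow> 0"
    by (rule Lim_null_comparison)
  moreover have "(\<lambda>n. (1 + (- (t\<^sup>2 * s' n / 2)) / real n) ^ n) \<longlonglongrightarrow> exp (- (t\<^sup>2 * s / 2))"
    by (intro tendsto_power_one_plus_div_exp) (auto simp: s'_def intro!: tendsto_intros var)
  then have "(\<lambda>n. complex_of_real ((1 + (- (t\<^sup>2 * s' n / 2)) / real n) ^ n))
      \<longlonglongrightarrow> complex_of_real (exp (- (t\<^sup>2 * s / 2)))"
    by (rule tendsto_of_real)
  ultimately have "\<phi> \<longlonglongrightarrow> complex_of_real (exp (- (t\<^sup>2 * s / 2)))"
    using tendsto_add by fastforce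
  then show "(\<lambda>n. \<phi> n) \<longlonglongrightarrow> char (distr std_normal_distribution borel (\<lambda>x. sqrt s * x)) t"
    using s by (simp add: char_distr_std_normal_scale power_mult_distrib)
qed

section \<open>The contaminated Poisson model\<close>

locale contaminated_poisson =
  fixes lam mu :: real and Y :: "nat pmf" and k :: nat
  assumes lam_pos: "lam > 0" and mu_pos: "mu > 0"
    and Y_mean: "measure_pmf.expectation Y real = mu"
    and Y_sq: "integrable (measure_pmf Y) (\<lambda>j. (real j)\<^sup>2)"
begin

abbreviation "P \<equiv> poisson_pmf mu"
abbreviation "\<nu> n \<equiv> Xn_pmf lam mu Y n"
abbreviation "M n \<equiv> measure_pmf (sample_pmf lam mu Y n)"
abbreviation "q n \<equiv> 1 - lam / sqrt (real n)"
abbreviation "c \<equiv> - pk k mu"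
abbreviation "F \<equiv> fk k mu"
abbreviation "PY \<equiv> measure_pmf.prob Y {..k}"
abbreviation "tau \<equiv> - lam * (PY - F)"

text \<open>Linearising at \<open>\<mu>\<close>, where \<open>f\<^sub>k' = -p\<^sub>k\<close>, one observation \<open>j\<close> contributes
  \<open>influence j\<close> to \<open>f\<^sub>k(X\<^sub>n') - F\<^sub>n'(k)\<close>; \<open>centre n\<close> is its mean under \<open>Xn_pmf\<close>.\<close>

definition influence :: "nat \<Rightarrow> real" where
  "influence j = c * real j - of_bool (j \<le> k)"

definition centre :: "nat \<Rightarrow> real" where
  "centre n = c * mu - q n * F - (1 - q n) * PY"

definition sq_dev :: "nat pmf \<Rightarrow> real \<Rightarrow> real" where
  "sq_dev p m = measure_pmf.expectation p (\<lambda>j. (influence j - m)\<^sup>2)"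

abbreviation "V n j \<equiv> influence j - centre n"
abbreviation "sigma2 \<equiv> sq_dev P (c * mu - F)"

lemma Y_integrable: "integrable (measure_pmf Y) real"
  by (rule measure_pmf.square_integrable_imp_integrable[OF _ Y_sq]) simp

lemmas P_first_moment = poisson_pmf_first_moment[OF mu_pos]
lemmas P_second_moment = poisson_pmf_second_moment[OF mu_pos]

lemma eventually_lam_square_le: "eventually (\<lambda>n. lam\<^sup>2 \<le> real n) sequentially"
  using eventually_ge_at_top[of "nat \<lceil>lam\<^sup>2\<rceil>"]
  by eventually_elim (meson of_nat_le_iff order_trans real_nat_ceiling_ge)

lemma q_bounds:
  assumes "lam\<^sup>2 \<le> real n"
  shows "0 \<le> q n" "q n \<le> 1"
proof -
  have "real n > 0"
    using assms lam_pos by (smt (verit) zero_less_power2)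
  moreover have "lam \<le> sqrt (real n)"
    using assms by (rule real_le_rsqrt)
  ultimately
  show "0 \<le> q n" "q n \<le> 1"
    using lam_pos by simp_all
qed

lemma tendsto_q: "(\<lambda>n. q n) \<longlonglongrightarrow> 1"
proof -
  have "(\<lambda>n. lam / sqrt (real n)) \<longlonglongrightarrow> 0"
    by (intro tendsto_divide_0[OF tendsto_const] filterlim_compose[OF sqrt_at_top]
        filterlim_real_sequentially filterlim_at_top_imp_at_infinity)
  from tendsto_diff[OF tendsto_const[of 1] this] show ?thesis
    by simp
qed

lemma Xn_pmf_integral:
  fixes h :: "nat \<Rightarrow> real"
  assumes n: "lam\<^sup>2 \<le> real n"
    and hP: "integrable (measure_pmf P) h" and hY: "integrable (measure_pmf Y) h"
  shows "integrable (measure_pmf (\<nu> n)) h"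
    "measure_pmf.expectation (\<nu> n) h
       = q n * measure_pmf.expectation P h + (1 - q n) * measure_pmf.expectation Y h"
  using integrable_mix_pmf[OF q_bounds[OF n] hP hY] integral_mix_pmf[OF q_bounds[OF n] hP hY]
  by (simp_all add: Xn_pmf_eq_mix_pmf)

lemma influence_moments:
  fixes p :: "nat pmf"
  assumes p2: "integrable (measure_pmf p) (\<lambda>j. (real j)\<^sup>2)"
  shows "integrable (measure_pmf p) influence"
    "integrable (measure_pmf p) (\<lambda>j. (influence j)\<^sup>2)"
    "measure_pmf.expectation p influence = c * measure_pmf.expectation p real - measure_pmf.prob p {..k}"
    "measure_pmf.expectation p (\<lambda>j. (influence j)\<^sup>2)
       = c\<^sup>2 * measure_pmf.expectation p (\<lambda>j. (real j)\<^sup>2) + measure_pmf.prob p {..k}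
         - 2 * c * measure_pmf.expectation p (\<lambda>j. real j * of_bool (j \<le> k))"
proof -
  have p1: "integrable (measure_pmf p) real"
    by (rule measure_pmf.square_integrable_imp_integrable[OF _ p2]) simp
  have ind: "integrable (measure_pmf p) (\<lambda>j. of_bool (j \<le> k) :: real)"
    by (rule measure_pmf.integrable_const_bound[where B=1]) auto
  have trunc: "integrable (measure_pmf p) (\<lambda>j. real j * of_bool (j \<le> k))"
    by (rule measure_pmf.integrable_const_bound[where B="real k"]) auto
  have sq: "(influence j)\<^sup>2 = c\<^sup>2 * (real j)\<^sup>2 + of_bool (j \<le> k) - 2 * c * (real j * of_bool (j \<le> k))" for j
    by (cases "j \<le> k") (simp_all add: influence_def power2_eq_square algebra_simps)
  show "integrable (measure_pmf p) influence"
    using p1 ind by (simp add: influence_def[abs_def])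
  show "integrable (measure_pmf p) (\<lambda>j. (influence j)\<^sup>2)"
    unfolding sq using p2 ind trunc by simp
  show "measure_pmf.expectation p influence = c * measure_pmf.expectation p real - measure_pmf.prob p {..k}"
    using p1 ind by (simp add: influence_def[abs_def] expectation_indicator_atMost)
  show "measure_pmf.expectation p (\<lambda>j. (influence j)\<^sup>2)
       = c\<^sup>2 * measure_pmf.expectation p (\<lambda>j. (real j)\<^sup>2) + measure_pmf.prob p {..k}
         - 2 * c * measure_pmf.expectation p (\<lambda>j. real j * of_bool (j \<le> k))"
    unfolding sq using p2 ind trunc by (simp add: expectation_indicator_atMost)
qed

lemma expectation_influence:
  "measure_pmf.expectation P influence = c * mu - F"
  "measure_pmf.expectation Y influence = c * mu - PY"
  using influence_moments(3)[OF P_second_moment(1)] influence_moments(3)[OF Y_sq]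
  by (simp_all add: P_first_moment Y_mean poisson_pmf_prob_atMost[OF mu_pos])

lemma sq_dev_eq:
  assumes p2: "integrable (measure_pmf p) (\<lambda>j. (real j)\<^sup>2)"
  shows "integrable (measure_pmf p) (\<lambda>j. (influence j - m)\<^sup>2)"
    "sq_dev p m = measure_pmf.expectation p (\<lambda>j. (influence j)\<^sup>2)
       - 2 * m * measure_pmf.expectation p influence + m\<^sup>2"
  using measure_pmf.expectation_square_diff_const[OF influence_moments(1,2)[OF p2]]
  by (simp_all add: sq_dev_def)

lemma tendsto_sq_dev:
  assumes "integrable (measure_pmf p) (\<lambda>j. (real j)\<^sup>2)" and "g \<longlonglongrightarrow> a"
  shows "(\<lambda>n. sq_dev p (g n)) \<longlonglongrightarrow> sq_dev p a"
  unfolding sq_dev_eq(2)[OF assms(1)] by (intro tendsto_intros assms(2))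

lemma Xn_V_moments:
  assumes n: "lam\<^sup>2 \<le> real n"
  shows "integrable (measure_pmf (\<nu> n)) (\<lambda>j. (V n j)\<^sup>2)"
    "measure_pmf.expectation (\<nu> n) (V n) = 0"
    "measure_pmf.expectation (\<nu> n) (\<lambda>j. (V n j)\<^sup>2) = q n * sq_dev P (centre n) + (1 - q n) * sq_dev Y (centre n)"
proof -
  note sqP = sq_dev_eq(1)[OF P_second_moment(1)] and sqY = sq_dev_eq(1)[OF Y_sq]
  show "integrable (measure_pmf (\<nu> n)) (\<lambda>j. (V n j)\<^sup>2)"
    by (rule Xn_pmf_integral(1)[OF n sqP sqY])
  show "measure_pmf.expectation (\<nu> n) (\<lambda>j. (V n j)\<^sup>2) = q n * sq_dev P (centre n) + (1 - q n) * sq_dev Y (centre n)"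
    unfolding sq_dev_def by (rule Xn_pmf_integral(2)[OF n sqP sqY])
  have V: "integrable (measure_pmf p) (V n)"
    "measure_pmf.expectation p (V n) = measure_pmf.expectation p influence - centre n"
    if "integrable (measure_pmf p) (\<lambda>j. (real j)\<^sup>2)" for p
    using influence_moments(1)[OF that] by simp_all
  have "measure_pmf.expectation (\<nu> n) (V n)
      = q n * measure_pmf.expectation P (V n) + (1 - q n) * measure_pmf.expectation Y (V n)"
    by (rule Xn_pmf_integral(2)[OF n V(1)[OF P_second_moment(1)] V(1)[OF Y_sq]])
  also have "\<dots> = q n * (c * mu - F - centre n) + (1 - q n) * (c * mu - PY - centre n)"
    by (simp only: V(2)[OF P_second_moment(1)] V(2)[OF Y_sq] expectation_influence)
  also have "\<dots> = 0"
  proof -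
    have "x * (a - F - (a - x * F - (1 - x) * PY)) + (1 - x) * (a - PY - (a - x * F - (1 - x) * PY)) = 0"
      for x a :: real
      by algebra
    then show ?thesis
      unfolding centre_def .
  qed
  finally show "measure_pmf.expectation (\<nu> n) (V n) = 0" .
qed

lemma tendsto_centre: "centre \<longlonglongrightarrow> c * mu - F"
proof -
  have "(\<lambda>n. c * mu - q n * F - (1 - q n) * PY) \<longlonglongrightarrow> c * mu - 1 * F - (1 - 1) * PY"
    by (intro tendsto_intros tendsto_q)
  then show ?thesis
    by (simp add: centre_def[abs_def])
qed

lemma tendsto_Xn_V_variance: "(\<lambda>n. measure_pmf.expectation (\<nu> n) (\<lambda>j. (V n j)\<^sup>2)) \<longlonglongrightarrow> sigma2"
proof -
  have "(\<lambda>n. q n * sq_dev P (centre n) + (1 - q n) * sq_dev Y (centre n))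
      \<longlonglongrightarrow> 1 * sigma2 + (1 - 1) * sq_dev Y (c * mu - F)"
    by (intro tendsto_intros tendsto_q tendsto_centre tendsto_sq_dev P_second_moment(1) Y_sq)
  then have "(\<lambda>n. q n * sq_dev P (centre n) + (1 - q n) * sq_dev Y (centre n)) \<longlonglongrightarrow> sigma2"
    by simp
  moreover have "eventually (\<lambda>n. q n * sq_dev P (centre n) + (1 - q n) * sq_dev Y (centre n)
      = measure_pmf.expectation (\<nu> n) (\<lambda>j. (V n j)\<^sup>2)) sequentially"
    using eventually_lam_square_le by eventually_elim (simp add: Xn_V_moments(3))
  ultimately show ?thesis
    by (rule Lim_transform_eventually)
qed

lemma sigma2_eq: "sigma2 = F * (1 - F) - exp (- 2 * mu) * mu ^ (2 * k + 1) / (fact k)\<^sup>2"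
proof -
  have "measure_pmf.expectation P (\<lambda>j. (influence j)\<^sup>2)
      = c\<^sup>2 * (mu\<^sup>2 + mu) + F - 2 * c * (mu * (F - pk k mu))"
    using influence_moments(4)[OF P_second_moment(1)]
    by (simp add: P_second_moment(2) poisson_pmf_prob_atMost[OF mu_pos]
        poisson_pmf_truncated_mean[OF mu_pos])
  then have "sigma2 = c\<^sup>2 * (mu\<^sup>2 + mu) + F - 2 * c * (mu * (F - pk k mu)) - (c * mu - F)\<^sup>2"
    by (simp add: sq_dev_eq(2)[OF P_second_moment(1)] expectation_influence power2_eq_square)
  also have "\<dots> = F * (1 - F) - c\<^sup>2 * mu"
    by (simp add: power2_eq_square algebra_simps)
  also have "c\<^sup>2 * mu = exp (- 2 * mu) * mu ^ (2 * k + 1) / (fact k)\<^sup>2"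
  proof -
    have "exp (- 2 * mu) = exp (- mu) * exp (- mu)"
      by (simp flip: exp_add)
    moreover have "mu ^ (2 * k + 1) = mu ^ k * mu ^ k * mu"
      by (simp add: mult_2 power_add)
    ultimately show ?thesis
      by (simp only:) (simp add: pk_def power2_eq_square field_simps)
  qed
  finally show ?thesis .
qed

lemma sigma2_pos: "sigma2 > 0"
proof -
  have "sigma2 \<noteq> 0"
  proof
    assume "sigma2 = 0"
    then have "AE j in measure_pmf P. (influence j - (c * mu - F))\<^sup>2 = 0"
      using integral_nonneg_eq_0_iff_AE[OF sq_dev_eq(1)[OF P_second_moment(1)]]
      by (simp add: sq_dev_def)
    then have "influence j = c * mu - F" for j
      using mu_pos by (simp add: AE_measure_pmf_iff)
    from this[of "Suc k"] this[of "Suc (Suc k)"] have "c = 0"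
      by (simp add: influence_def algebra_simps)
    then show False
      using mu_pos by (simp add: pk_def)
  qed
  moreover have "sigma2 \<ge> 0"
    by (simp add: sq_dev_def)
  ultimately show ?thesis
    by simp
qed

lemma V_bound:
  obtains B where "\<And>n j. \<bar>V n j\<bar> \<le> \<bar>c\<bar> * real j + B"
proof -
  obtain B where B: "\<bar>centre n\<bar> \<le> B" for n
    using convergent_imp_Bseq[OF convergentI[OF tendsto_centre]] by (metis BseqE real_norm_def)
  have "\<bar>V n j\<bar> \<le> \<bar>c\<bar> * real j + (1 + B)" for n j
  proof -
    have "\<bar>V n j\<bar> \<le> \<bar>c * real j\<bar> + \<bar>of_bool (j \<le> k) :: real\<bar> + \<bar>centre n\<bar>"
      unfolding influence_def
      by (rule order_trans[OF abs_triangle_ineq4]) (rule add_right_mono[OF abs_triangle_ineq4])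
    then show ?thesis
      using B[of n] by (cases "j \<le> k") (simp_all add: abs_mult)
  qed
  then show ?thesis
    by (rule that)
qed

lemma lindeberg_pmf:
  assumes p2: "integrable (measure_pmf p) (\<lambda>j. (real j)\<^sup>2)"
  shows "(\<lambda>n. measure_pmf.expectation p (\<lambda>j. min (6 * (V n j)\<^sup>2) (\<bar>t\<bar> * \<bar>V n j\<bar> ^ 3 / sqrt (real n))))
      \<longlonglongrightarrow> 0"
proof -
  define \<phi> where "\<phi> n j = min (6 * (V n j)\<^sup>2) (\<bar>t\<bar> * \<bar>V n j\<bar> ^ 3 / sqrt (real n))" for n j
  obtain B where V_le: "\<bar>V n j\<bar> \<le> \<bar>c\<bar> * real j + B" for n j
    using V_bound by metis
  have le_cube: "norm (\<phi> n j) \<le> \<bar>t\<bar> * (\<bar>c\<bar> * real j + B) ^ 3 / sqrt (real n)" for n j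
    using V_le[where n=n and j=j]
    by (simp add: \<phi>_def min.coboundedI2 divide_right_mono mult_left_mono power_mono)
  have le_square: "norm (\<phi> n j) \<le> 6 * (\<bar>c\<bar> * real j + B)\<^sup>2" for n j
    using power_mono[OF V_le[where n=n and j=j] abs_ge_zero, of 2] by (simp add: \<phi>_def)
  have "(\<lambda>n. \<phi> n j) \<longlonglongrightarrow> 0" for j
    by (rule Lim_null_comparison[OF always_eventually[OF allI[OF le_cube]]])
      (intro tendsto_divide_0[OF tendsto_const] filterlim_compose[OF sqrt_at_top]
        filterlim_real_sequentially filterlim_at_top_imp_at_infinity)
  moreover have "(\<lambda>j. 6 * (\<bar>c\<bar> * real j + B)\<^sup>2)
      = (\<lambda>j. 6 * (c\<^sup>2 * (real j)\<^sup>2 + 2 * \<bar>c\<bar> * B * real j + B\<^sup>2))"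
    by (simp add: fun_eq_iff power2_sum power_mult_distrib)
  then have "integrable (measure_pmf p) (\<lambda>j. 6 * (\<bar>c\<bar> * real j + B)\<^sup>2)"
    using p2 measure_pmf.square_integrable_imp_integrable[OF _ p2] by simp
  ultimately have "(\<lambda>n. measure_pmf.expectation p (\<phi> n)) \<longlonglongrightarrow> measure_pmf.expectation p (\<lambda>j. 0::real)"
    by (intro integral_dominated_convergence[where w="\<lambda>j. 6 * (\<bar>c\<bar> * real j + B)\<^sup>2"] AE_I2 le_square)
      auto
  then show ?thesis
    by (simp add: \<phi>_def[abs_def])
qed

lemma lindeberg_Xn_pmf:
  "(\<lambda>n. measure_pmf.expectation (\<nu> n) (\<lambda>j. min (6 * (V n j)\<^sup>2) (\<bar>t\<bar> * \<bar>V n j\<bar> ^ 3 / sqrt (real n))))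
      \<longlonglongrightarrow> 0"
proof -
  let ?\<phi> = "\<lambda>n j. min (6 * (V n j)\<^sup>2) (\<bar>t\<bar> * \<bar>V n j\<bar> ^ 3 / sqrt (real n))"
  have "(\<lambda>n. q n * measure_pmf.expectation P (?\<phi> n) + (1 - q n) * measure_pmf.expectation Y (?\<phi> n))
      \<longlonglongrightarrow> 1 * 0 + (1 - 1) * 0"
    by (intro tendsto_intros tendsto_q lindeberg_pmf P_second_moment(1) Y_sq)
  moreover have int: "integrable (measure_pmf p) (?\<phi> n)"
    if "integrable (measure_pmf p) (\<lambda>j. (real j)\<^sup>2)" for p n
  proof (rule Bochner_Integration.integrable_bound)
    show "integrable (measure_pmf p) (\<lambda>j. 6 * (V n j)\<^sup>2)"
      using sq_dev_eq(1)[OF that] by simp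
  qed auto
  have "eventually (\<lambda>n. q n * measure_pmf.expectation P (?\<phi> n) + (1 - q n) * measure_pmf.expectation Y (?\<phi> n)
      = measure_pmf.expectation (\<nu> n) (?\<phi> n)) sequentially"
    using eventually_lam_square_le
    by eventually_elim (simp add: Xn_pmf_integral(2) int P_second_moment(1) Y_sq)
  ultimately show ?thesis
    by (simp add: Lim_transform_eventually)
qed

abbreviation "Z n \<omega> \<equiv> tau + (\<Sum>i<n. V n (\<omega> i) / sqrt (real n))"

lemma weak_conv_m_Z: "weak_conv_m (\<lambda>n. distr (M n) borel (Z n)) (normal_measure tau sigma2)"
proof -
  let ?S = "\<lambda>n \<omega>. \<Sum>i<n. V n (\<omega> i) / sqrt (real n)"
  have centred: "eventually (\<lambda>n. integrable (measure_pmf (\<nu> n)) (\<lambda>j. (V n j)\<^sup>2)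
      \<and> measure_pmf.expectation (\<nu> n) (V n) = 0) sequentially"
    using eventually_lam_square_le by eventually_elim (simp add: Xn_V_moments)
  have S: "weak_conv_m (\<lambda>n. distr (M n) borel (?S n)) (distr std_normal_distribution borel (\<lambda>x. sqrt sigma2 * x))"
    unfolding sample_pmf_def
    by (rule clt_triangular_pmf[OF sigma2_pos centred tendsto_Xn_V_variance lindeberg_Xn_pmf])
  have "weak_conv_m (\<lambda>n. distr (distr (M n) borel (?S n)) borel (\<lambda>x. tau + x))
      (distr (distr std_normal_distribution borel (\<lambda>x. sqrt sigma2 * x)) borel (\<lambda>x. tau + x))"
    by (rule weak_conv_m_distr_continuous[OF _ _ S])
      (auto intro!: prob_space.real_distribution_distr prob_space_normal_density continuous_intros
        simp: measure_pmf.prob_space_axioms)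
  moreover have "distr (distr (M n) borel (?S n)) borel (\<lambda>x. tau + x) = distr (M n) borel (Z n)" for n
    by (subst distr_distr) (auto simp: comp_def)
  moreover have "distr (distr std_normal_distribution borel (\<lambda>x. sqrt sigma2 * x)) borel (\<lambda>x. tau + x)
      = normal_measure tau sigma2"
    using sigma2_pos distr_std_normal_affine[of "sqrt sigma2" tau]
    by (subst distr_distr) (auto simp: comp_def)
  ultimately show ?thesis
    by simp
qed

text \<open>Since \<open>\<surd>n (1 - q n) = lam\<close>, the contamination contributes exactly the drift \<open>tau\<close>.\<close>

lemma U_eq_Z_plus_remainder:
  assumes "n > 0"
  shows "U n k \<omega> = Z n \<omega> + sqrt (real n) * (fk k (sample_mean n \<omega>) - F + pk k mu * (sample_mean n \<omega> - mu))"
proof -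
  define r where "r = sqrt (real n)"
  define X where "X = sample_mean n \<omega>"
  define S where "S = (\<Sum>i<n. real (\<omega> i))"
  define I where "I = (\<Sum>i<n. of_bool (\<omega> i \<le> k) :: real)"
  have r: "r > 0" "r * r = real n"
    using assms by (simp_all add: r_def)
  have "(\<Sum>i<n. V n (\<omega> i) / r) = (c * S - I - real n * centre n) / r"
    by (simp add: S_def I_def influence_def sum_divide_distrib[symmetric] sum_subtractf sum_distrib_left)
  then have "U n k \<omega> - Z n \<omega> = r * (fk k X - I / real n) - tau - (c * S - I - real n * centre n) / r"
    by (simp add: U_def emp_cdf_def r_def X_def I_def)
  also have "\<dots> = r * (fk k X - c * X + centre n) - tau"
    using r unfolding X_def sample_mean_def S_def[symmetric] r(2)[symmetric] by (simp add: field_simps)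
  also have "\<dots> = r * (fk k X - F + pk k mu * (X - mu))"
  proof -
    have "r * centre n = r * (c * mu - F) + lam * (F - PY)"
      using r by (simp add: centre_def r_def[symmetric] algebra_simps)
    then show ?thesis
      by (simp add: algebra_simps)
  qed
  finally show ?thesis
    by (simp add: r_def X_def)
qed

lemma Xn_centred_square:
  assumes n: "lam\<^sup>2 \<le> real n"
  shows "integrable (measure_pmf (\<nu> n)) (\<lambda>j. (real j - mu)\<^sup>2)"
    "measure_pmf.expectation (\<nu> n) (\<lambda>j. real j - mu) = 0"
    "measure_pmf.expectation (\<nu> n) (\<lambda>j. (real j - mu)\<^sup>2) \<le> mu + measure_pmf.expectation Y (\<lambda>j. (real j - mu)\<^sup>2)"
proof -
  note P_sq = measure_pmf.expectation_square_diff_const[OF P_first_moment(1) P_second_moment(1), of mu]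
  note Y_sq' = measure_pmf.expectation_square_diff_const[OF Y_integrable Y_sq, of mu]
  have P_lin: "integrable (measure_pmf P) (\<lambda>j. real j - mu)"
    and Y_lin: "integrable (measure_pmf Y) (\<lambda>j. real j - mu)"
    using P_first_moment(1) Y_integrable by simp_all
  show "integrable (measure_pmf (\<nu> n)) (\<lambda>j. (real j - mu)\<^sup>2)"
    by (rule Xn_pmf_integral(1)[OF n P_sq(1) Y_sq'(1)])
  show "measure_pmf.expectation (\<nu> n) (\<lambda>j. real j - mu) = 0"
    using P_first_moment Y_integrable
    by (simp add: Xn_pmf_integral(2)[OF n P_lin Y_lin] Y_mean)
  have "measure_pmf.expectation P (\<lambda>j. (real j - mu)\<^sup>2) = mu"
    by (simp add: P_sq(2) P_first_moment(2) P_second_moment(2)) (simp add: power2_eq_square)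
  then have "q n * measure_pmf.expectation P (\<lambda>j. (real j - mu)\<^sup>2) \<le> mu"
    by (simp only:) (rule mult_left_le_one_le, use q_bounds[OF n] mu_pos in auto)
  moreover have "(1 - q n) * measure_pmf.expectation Y (\<lambda>j. (real j - mu)\<^sup>2)
      \<le> measure_pmf.expectation Y (\<lambda>j. (real j - mu)\<^sup>2)"
    by (rule mult_left_le_one_le) (use q_bounds[OF n] in auto)
  ultimately show "measure_pmf.expectation (\<nu> n) (\<lambda>j. (real j - mu)\<^sup>2) \<le> mu + measure_pmf.expectation Y (\<lambda>j. (real j - mu)\<^sup>2)"
    unfolding Xn_pmf_integral(2)[OF n P_sq(1) Y_sq'(1)] by linarith
qed

lemma U_minus_Z_le:
  assumes "n > 0"
  shows "\<bar>U n k \<omega> - Z n \<omega>\<bar> \<le> sqrt (real n) / (real n)\<^sup>2 * (\<Sum>i<n. real (\<omega> i) - mu)\<^sup>2"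
proof -
  have "sample_mean n \<omega> \<ge> 0"
    unfolding sample_mean_def by (intro divide_nonneg_nonneg sum_nonneg) auto
  from fk_linearization_error[OF this mu_pos, of k]
  have "\<bar>fk k (sample_mean n \<omega>) - F + pk k mu * (sample_mean n \<omega> - mu)\<bar> \<le> (sample_mean n \<omega> - mu)\<^sup>2"
    using zero_le_power2[of "sample_mean n \<omega> - mu"] by linarith
  then have "\<bar>U n k \<omega> - Z n \<omega>\<bar> \<le> sqrt (real n) * (sample_mean n \<omega> - mu)\<^sup>2"
    by (simp add: U_eq_Z_plus_remainder[OF assms] abs_mult mult_left_mono)
  moreover have "sample_mean n \<omega> - mu = (\<Sum>i<n. real (\<omega> i) - mu) / real n"
    using assms by (simp add: sample_mean_def sum_subtractf field_simps)
  ultimately show ?thesis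
    by (simp add: power_divide)
qed

lemma expectation_sample_sq_dev:
  assumes n: "lam\<^sup>2 \<le> real n"
  shows "integrable (M n) (\<lambda>\<omega>. (\<Sum>i<n. real (\<omega> i) - mu)\<^sup>2)"
    "measure_pmf.expectation (sample_pmf lam mu Y n) (\<lambda>\<omega>. (\<Sum>i<n. real (\<omega> i) - mu)\<^sup>2)
       \<le> real n * (mu + measure_pmf.expectation Y (\<lambda>j. (real j - mu)\<^sup>2))"
  using integral_Pi_pmf_sum_square[OF Xn_centred_square(1,2)[OF n], of n 0] Xn_centred_square(3)[OF n]
  by (simp_all add: sample_pmf_def mult_left_mono)

lemma remainder_tendsto_0: "(\<lambda>n. \<integral>\<omega>. min 1 \<bar>U n k \<omega> - Z n \<omega>\<bar> \<partial>M n) \<longlonglongrightarrow> 0"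
proof (rule Lim_null_comparison)
  define K where "K = mu + measure_pmf.expectation Y (\<lambda>j. (real j - mu)\<^sup>2)"
  show "eventually (\<lambda>n. norm (\<integral>\<omega>. min 1 \<bar>U n k \<omega> - Z n \<omega>\<bar> \<partial>M n) \<le> K / sqrt (real n)) sequentially"
    using eventually_lam_square_le eventually_gt_at_top[of 0]
  proof eventually_elim
    case (elim n)
    note S = expectation_sample_sq_dev[OF elim(1), folded K_def]
    have "integrable (M n) (\<lambda>\<omega>. min 1 \<bar>U n k \<omega> - Z n \<omega>\<bar>)"
      by (rule measure_pmf.integrable_const_bound[where B=1]) auto
    then have "(\<integral>\<omega>. min 1 \<bar>U n k \<omega> - Z n \<omega>\<bar> \<partial>M n)
        \<le> (\<integral>\<omega>. sqrt (real n) / (real n)\<^sup>2 * (\<Sum>i<n. real (\<omega> i) - mu)\<^sup>2 \<partial>M n)"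
      by (rule integral_mono) (use S(1) U_minus_Z_le[OF elim(2)] in \<open>auto intro: min.coboundedI2\<close>)
    also have "\<dots> = sqrt (real n) / (real n)\<^sup>2
        * measure_pmf.expectation (sample_pmf lam mu Y n) (\<lambda>\<omega>. (\<Sum>i<n. real (\<omega> i) - mu)\<^sup>2)"
      by simp
    also have "\<dots> \<le> sqrt (real n) / (real n)\<^sup>2 * (real n * K)"
      using S(2) by (intro mult_left_mono) simp_all
    also have "\<dots> = K / sqrt (real n)"
    proof -
      define r where "r = sqrt (real n)"
      have r: "sqrt (real n) = r" "real n = r * r" "r > 0"
        using elim(2) by (simp_all add: r_def)
      show ?thesis
        unfolding r(1,2) using r(3) by (simp add: field_simps power2_eq_square)
    qed
    finally show ?case
      by simp
  qed
  show "(\<lambda>n. K / sqrt (real n)) \<longlonglongrightarrow> 0"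
    by (intro tendsto_divide_0[OF tendsto_const] filterlim_compose[OF sqrt_at_top]
        filterlim_real_sequentially filterlim_at_top_imp_at_infinity)
qed

theorem U_weak_conv:
  "weak_conv_m (\<lambda>n. distr (M n) borel (U n k))
     (normal_measure (- lam * (PY - F)) (F * (1 - F) - exp (- 2 * mu) * mu ^ (2 * k + 1) / (fact k)\<^sup>2))"
proof -
  have "weak_conv_m (\<lambda>n. distr (M n) borel (U n k)) (normal_measure tau sigma2)"
    by (rule slutsky_weak_conv_m[OF measure_pmf.prob_space_axioms _ _
          real_distribution_normal_measure[OF sigma2_pos] weak_conv_m_Z remainder_tendsto_0]) simp_all
  then show ?thesis
    by (simp only: sigma2_eq)
qed

lemma expectation_sample_mean:
  assumes n: "lam\<^sup>2 \<le> real n"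
  shows "integrable (M n) (sample_mean n)" "measure_pmf.expectation (sample_pmf lam mu Y n) (sample_mean n) = mu"
proof -
  have "integrable (measure_pmf (\<nu> n)) real" "measure_pmf.expectation (\<nu> n) real = mu"
    using P_first_moment Y_integrable q_bounds[OF n]
    by (simp_all add: Xn_pmf_integral[OF n] Y_mean algebra_simps)
  then have i: "integrable (M n) (\<lambda>\<omega>. real (\<omega> i))" "measure_pmf.expectation (sample_pmf lam mu Y n) (\<lambda>\<omega>. real (\<omega> i)) = mu"
    if "i < n" for i
    using that unfolding sample_pmf_def
    by (simp_all add: integrable_Pi_pmf_component_iff integral_Pi_pmf_component)
  then show "integrable (M n) (sample_mean n)"
    unfolding sample_mean_def[abs_def] by (intro Bochner_Integration.integrable_divide integrable_sum) auto
  have "n > 0"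
    using n lam_pos by (smt (verit) of_nat_0_less_iff zero_less_power2)
  with i show "measure_pmf.expectation (sample_pmf lam mu Y n) (sample_mean n) = mu"
    unfolding sample_mean_def[abs_def] by simp
qed

end

section \<open>The data-driven choice \<open>k\<^sub>n\<^sup>*\<close>\<close>

text \<open>As \<open>sigma_tilde_sq 0 m \<le> 1\<close>, the criterion at \<open>k = 0\<close> reduces to \<open>exp (2 X\<^sub>n') \<le> \<surd>n\<close>.\<close>

lemma kstar_eq_0:
  assumes n: "n > 0" and small: "sample_mean n \<omega> \<le> ln (real n) / 4"
  shows "kstar n \<omega> = 0"
  unfolding kstar_def
proof (rule Least_eq_0)
  define m where "m = sample_mean n \<omega>"
  have "m \<ge> 0"
    unfolding m_def sample_mean_def by (intro divide_nonneg_nonneg sum_nonneg) auto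
  have "sigma_tilde_sq 0 m = exp (- 2 * m) * (exp m - 1 - m)"
    by (simp add: sigma_tilde_sq_def)
  also have "\<dots> \<le> exp (- 2 * m) * exp m"
    using \<open>m \<ge> 0\<close> by (intro mult_left_mono) auto
  also have "\<dots> \<le> 1"
    using \<open>m \<ge> 0\<close> by (simp flip: exp_add)
  finally have sigma: "sqrt (sigma_tilde_sq 0 m) \<le> 1"
    by simp
  have f0: "(fk 0 m)\<^sup>2 = exp (- 2 * m)"
    by (simp add: fk_def power2_eq_square flip: exp_add)
  have "2 * m \<le> ln (sqrt (real n))"
    using small n by (simp add: m_def ln_sqrt)
  then have "exp (2 * m) \<le> sqrt (real n)"
    using n by (metis exp_le_cancel_iff exp_ln real_sqrt_gt_0_iff of_nat_0_less_iff)
  then have "1 \<le> (fk 0 m)\<^sup>2 * sqrt (real n)"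
    unfolding f0 by (simp add: exp_minus field_simps)
  moreover from this sigma have "sqrt (sigma_tilde_sq 0 m) \<le> (fk 0 m)\<^sup>2 * sqrt (real n)"
    by linarith
  ultimately have "of_bool (1 \<le> m) * sqrt (sigma_tilde_sq 0 m) / ((fk 0 m)\<^sup>2 * sqrt (real n)) \<le> 1"
    by (cases "1 \<le> m") (auto simp: divide_le_eq_1)
  also have "(1::real) \<le> exp 1"
    by simp
  finally show "of_bool (1 \<le> sample_mean n \<omega>) * sqrt (sigma_tilde_sq 0 (sample_mean n \<omega>)) /
      ((fk 0 (sample_mean n \<omega>))\<^sup>2 * sqrt (real n)) \<le> exp 1"
    by (simp add: m_def)
qed

lemma (in contaminated_poisson) U_kstar_minus_U_0_tendsto_0:
  "(\<lambda>n. \<integral>\<omega>. min 1 \<bar>U n (kstar n \<omega>) \<omega> - U n 0 \<omega>\<bar> \<partial>M n) \<longlonglongrightarrow> 0"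
proof (rule Lim_null_comparison)
  \<comment> \<open>Markov's inequality, in the form \<open>min 1 |U n (kstar n) - U n 0| \<le> 4 X\<^sub>n' / ln n\<close>\<close>
  show "eventually (\<lambda>n. norm (\<integral>\<omega>. min 1 \<bar>U n (kstar n \<omega>) \<omega> - U n 0 \<omega>\<bar> \<partial>M n)
      \<le> mu * (4 / ln (real n))) sequentially"
    using eventually_lam_square_le eventually_ge_at_top[of 2]
  proof eventually_elim
    case (elim n)
    have "ln (real n) > 0" "n > 0"
      using elim(2) by simp_all
    have pointwise: "min 1 \<bar>U n (kstar n \<omega>) \<omega> - U n 0 \<omega>\<bar> \<le> sample_mean n \<omega> * (4 / ln (real n))" for \<omega>
    proof (cases "sample_mean n \<omega> \<le> ln (real n) / 4")
      case True
      moreover have "sample_mean n \<omega> \<ge> 0"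
        unfolding sample_mean_def by (intro divide_nonneg_nonneg sum_nonneg) auto
      ultimately show ?thesis
        using kstar_eq_0[OF \<open>n > 0\<close>] \<open>ln (real n) > 0\<close> by simp
    next
      case False
      then have "sample_mean n \<omega> * (4 / ln (real n)) > 1"
        using \<open>ln (real n) > 0\<close> by (simp add: field_simps)
      then show ?thesis
        by linarith
    qed
    have "integrable (M n) (\<lambda>\<omega>. min 1 \<bar>U n (kstar n \<omega>) \<omega> - U n 0 \<omega>\<bar>)"
      by (rule measure_pmf.integrable_const_bound[where B=1]) auto
    then have "(\<integral>\<omega>. min 1 \<bar>U n (kstar n \<omega>) \<omega> - U n 0 \<omega>\<bar> \<partial>M n) \<le> (\<integral>\<omega>. sample_mean n \<omega> * (4 / ln (real n)) \<partial>M n)"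
      by (rule integral_mono) (use expectation_sample_mean(1)[OF elim(1)] pointwise in auto)
    also have "\<dots> = mu * (4 / ln (real n))"
      using expectation_sample_mean(2)[OF elim(1)] by simp
    finally show ?case
      by simp
  qed
  show "(\<lambda>n. mu * (4 / ln (real n))) \<longlonglongrightarrow> 0"
    by (intro tendsto_mult_right_zero tendsto_divide_0[OF tendsto_const] filterlim_compose[OF ln_at_top]
        filterlim_real_sequentially filterlim_at_top_imp_at_infinity)
qed

lemma U_kstar_weak_conv:
  fixes lam mu :: real and Y :: "nat pmf"
  assumes "lam > 0" "mu > 0" "measure_pmf.expectation Y real = mu"
    and "integrable (measure_pmf Y) (\<lambda>j. (real j)\<^sup>2)"
  shows "weak_conv_m (\<lambda>n. distr (measure_pmf (sample_pmf lam mu Y n)) borel (\<lambda>\<omega>. U n (kstar n \<omega>) \<omega>))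
      (normal_measure (lam * (exp (- mu) - pmf Y 0)) (exp (- 2 * mu) * (exp mu - 1 - mu)))"
proof -
  interpret contaminated_poisson lam mu Y 0
    by unfold_locales (fact assms)+
  have "{..0::nat} = {0}"
    by auto
  then have tau0: "- lam * (measure_pmf.prob Y {..0} - fk 0 mu) = lam * (exp (- mu) - pmf Y 0)"
    by (simp add: measure_pmf_single fk_def algebra_simps)
  have "exp (- 2 * mu) = exp (- mu) * exp (- mu)" "exp (- mu) * exp mu = 1"
    by (simp_all flip: exp_add)
  then have sigma0: "fk 0 mu * (1 - fk 0 mu) - exp (- 2 * mu) * mu ^ (2 * 0 + 1) / (fact 0)\<^sup>2
      = exp (- 2 * mu) * (exp mu - 1 - mu)"
    by (simp add: fk_def algebra_simps)
  have limit: "real_distribution (normal_measure (lam * (exp (- mu) - pmf Y 0)) (exp (- 2 * mu) * (exp mu - 1 - mu)))"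
    using sigma2_pos unfolding sigma2_eq sigma0 by (rule real_distribution_normal_measure)
  show ?thesis
    by (rule slutsky_weak_conv_m[OF measure_pmf.prob_space_axioms _ _ limit
          U_weak_conv[unfolded tau0 sigma0] U_kstar_minus_U_0_tendsto_0]) simp_all
qed

theorem proposition3:
  fixes lam mu :: real and Y :: "nat pmf"
  assumes lam_pos: "lam > 0" and mu_pos: "mu > 0"
    and Y_mean: "measure_pmf.expectation Y real = mu"
    and Y_sq: "integrable (measure_pmf Y) (\<lambda>j. (real j)\<^sup>2)"
  shows "(\<forall>k::nat.
           weak_conv_m
             (\<lambda>n. distr (measure_pmf (sample_pmf lam mu Y n)) borel (U n k))
             (normal_measure
                (- lam * (measure_pmf.prob Y {..k} - fk k mu))
                (fk k mu * (1 - fk k mu) - exp (- 2 * mu) * mu ^ (2 * k + 1) / (fact k)\<^sup>2)))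
       \<and> weak_conv_m
             (\<lambda>n. distr (measure_pmf (sample_pmf lam mu Y n)) borel (\<lambda>\<omega>. U n (kstar n \<omega>) \<omega>))
             (normal_measure (lam * (exp (- mu) - pmf Y 0))
                (exp (- 2 * mu) * (exp mu - 1 - mu)))"
proof (intro conjI allI)
  fix k :: nat
  interpret contaminated_poisson lam mu Y k
    by unfold_locales (fact assms)+
  show "weak_conv_m (\<lambda>n. distr (measure_pmf (sample_pmf lam mu Y n)) borel (U n k))
      (normal_measure (- lam * (measure_pmf.prob Y {..k} - fk k mu))
        (fk k mu * (1 - fk k mu) - exp (- 2 * mu) * mu ^ (2 * k + 1) / (fact k)\<^sup>2))"
    by (rule U_weak_conv)
qed (rule U_kstar_weak_conv[OF assms])

end
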